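(* Let $\mathcal P=\mathcal P_n(\alpha,\ell)$ be a quasi-regular curvilinear $n$-gon (all interior angles equal to $\alpha$, all side lengths equal to $\ell$) with $\alpha\in(0,\pi)\setminus\mathcal E$. Then the set of its quasi-eigenvalues (as a set of values, without multiplicity) is $$\Big\{\tfrac1\ell\Big(\pm\arccos\big(\sin(\tfrac{\pi^2}{2\alpha})\cos(\tfrac{2\pi q}{n})\big)+2\pi m\Big):\ m\in\mathbb N\cup\{0\},\ q=0,1,\dots,\lfloor n/2\rfloor\Big\}\cap[0,+\infty).$$ Each such quasi-eigenvalue has multiplicity two, except in the following cases, where it has multiplicity one: (i) $\alpha\notin\mathcal S$ and $q=0$; (ii) $\alpha\notin\mathcal S$, $n$ even and $q=n/2$; (iii) $\alpha\in\mathcal S$ even, $q=0$ and $m=0$ (the quasi-eigenvalue $0$); (iv) $\alpha\in\mathcal S$ odd, $n$ even, $q=n/2$ and $m=0$ (the quasi-eigenvalue $0$).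
   Context: $\mathcal E=\{\pi/(2k):k\in\mathbb N\}$ (exceptional angles), $\mathcal S=\{\pi/(2k+1):k\in\mathbb N\}$ (special angles); a special angle $\pi/(2k+1)$ is called even or odd according as $k$ is even or odd. A curvilinear polygon $\mathcal P(\boldsymbol\alpha,\boldsymbol\ell)$: bounded simply connected planar domain bounded by $n$ smooth arcs of lengths $\ell_j$, vertices $V_1,\dots,V_n$ clockwise, interior angle $\alpha_j\in(0,\pi)$ at $V_j$. For $\alpha\notin\mathcal E$, $\mathtt A(\alpha)=\begin{pmatrix}\csc\frac{\pi^2}{2\alpha}&-i\cot\frac{\pi^2}{2\alpha}\\ i\cot\frac{\pi^2}{2\alpha}&\csc\frac{\pi^2}{2\alpha}\end{pmatrix}$, $\mathtt B(\ell,\sigma)=\operatorname{diag}(e^{i\ell\sigma},e^{-i\ell\sigma})$. For a polygon without exceptional angles, $\sigma\ge0$ is a quasi-eigenvalue iff $1$ is an eigenvalue of $\mathtt T(\sigma)=\mathtt A(\alpha_n)\mathtt B(\ell_n,\sigma)\cdots\mathtt A(\alpha_1)\mathtt B(\ell_1,\sigma)$; the multiplicity of a quasi-eigenvalue $\sigma>0$ is the geometric multiplicity of the eigenvalue $1$ of $\mathtt T(\sigma)$, and the quasi-eigenvalue $0$ (if present) has multiplicity $1$. *)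

theory Defs
  imports Complex_Main "Jordan_Normal_Form.Jordan_Normal_Form_Uniqueness"
begin

definition exceptional_angle :: "real \<Rightarrow> bool" where
  "exceptional_angle \<alpha> \<longleftrightarrow> (\<exists>k::nat. k \<ge> 1 \<and> \<alpha> = pi / (2 * real k))"

definition special_angle :: "real \<Rightarrow> bool" where
  "special_angle \<alpha> \<longleftrightarrow> (\<exists>k::nat. k \<ge> 1 \<and> \<alpha> = pi / (2 * real k + 1))"

definition even_special_angle :: "real \<Rightarrow> bool" where
  "even_special_angle \<alpha> \<longleftrightarrow> (\<exists>k::nat. k \<ge> 1 \<and> even k \<and> \<alpha> = pi / (2 * real k + 1))"

definition odd_special_angle :: "real \<Rightarrow> bool" where
  "odd_special_angle \<alpha> \<longleftrightarrow> (\<exists>k::nat. k \<ge> 1 \<and> odd k \<and> \<alpha> = pi / (2 * real k + 1))"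

definition A_mat :: "real \<Rightarrow> complex mat" where
  "A_mat \<alpha> = (let x = pi^2 / (2 * \<alpha>) in
     mat_of_rows_list 2
       [[complex_of_real (1 / sin x), - \<i> * complex_of_real (cot x)],
        [\<i> * complex_of_real (cot x), complex_of_real (1 / sin x)]])"

definition B_mat :: "real \<Rightarrow> real \<Rightarrow> complex mat" where
  "B_mat l \<sigma> = mat_of_rows_list 2
       [[exp (\<i> * complex_of_real (l * \<sigma>)), 0],
        [0, exp (- \<i> * complex_of_real (l * \<sigma>))]]"

text \<open>T(sigma) = A(alpha_n) B(l_n,sigma) ... A(alpha_1) B(l_1,sigma), where the polygon data
  is given as a list [(alpha_1,l_1), ..., (alpha_n,l_n)].\<close>
definition T_mat :: "(real \<times> real) list \<Rightarrow> real \<Rightarrow> complex mat" where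
  "T_mat P \<sigma> = foldl (\<lambda>M (\<alpha>, l). A_mat \<alpha> * B_mat l \<sigma> * M) (1\<^sub>m 2) P"

definition quasi_eigenvalue :: "(real \<times> real) list \<Rightarrow> real \<Rightarrow> bool" where
  "quasi_eigenvalue P \<sigma> \<longleftrightarrow> \<sigma> \<ge> 0 \<and> eigenvalue (T_mat P \<sigma>) 1"

definition qev_multiplicity :: "(real \<times> real) list \<Rightarrow> real \<Rightarrow> nat" where
  "qev_multiplicity P \<sigma> = (if \<sigma> = 0 then 1 else dim_gen_eigenspace (T_mat P \<sigma>) 1 1)"

definition quasi_regular :: "nat \<Rightarrow> real \<Rightarrow> real \<Rightarrow> (real \<times> real) list" where
  "quasi_regular n \<alpha> l = replicate n (\<alpha>, l)"

definition qr_value :: "nat \<Rightarrow> real \<Rightarrow> real \<Rightarrow> real \<Rightarrow> nat \<Rightarrow> nat \<Rightarrow> real" where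
  "qr_value n \<alpha> l s m q =
     (s * arccos (sin (pi^2 / (2 * \<alpha>)) * cos (2 * pi * real q / real n)) + 2 * pi * real m) / l"

end

theory Submission
  imports Defs
begin

text \<open>The transfer matrix of the quasi-regular \<open>n\<close>-gon is \<open>T(\<sigma>) = N\<^sup>n\<close> with \<open>N = A(\<alpha>) B(\<ell>, \<sigma>)\<close>, a
  matrix of determinant 1 and trace \<open>\<tau> = 2 cos (\<ell>\<sigma>) / sin (\<pi>\<^sup>2/(2\<alpha>))\<close>. By Cayley--Hamilton,
  \<open>N\<^sup>n = U\<^sub>n N - U\<^sub>n\<^sub>-\<^sub>1\<close> for the Lucas sequence \<open>U\<close> of \<open>\<tau>\<close>, and 1 is an eigenvalue of \<open>N\<^sup>n\<close> iff
  \<open>trace (N\<^sup>n) = V\<^sub>n(\<tau>) = 2\<close>. Since \<open>|V\<^sub>n(\<tau>)| > 2\<close> for \<open>|\<tau>| > 2\<close> and \<open>V\<^sub>n(2 cos \<phi>) = 2 cos (n\<phi>)\<close>, this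
  means \<open>\<tau> = 2 cos (2\<pi>q/n)\<close> with \<open>0 \<le> q \<le> n/2\<close>, i.e. \<open>cos (\<ell>\<sigma>) = sin (\<pi>\<^sup>2/(2\<alpha>)) cos (2\<pi>q/n)\<close>, whose
  nonnegative solutions are the listed values. For \<open>0 < q < n/2\<close> one gets \<open>N\<^sup>n = 1\<close>, hence
  multiplicity two. For \<open>q \<in> {0, n/2}\<close>, \<open>N\<^sup>n - 1\<close> is a nonzero multiple of \<open>N \<mp> 1\<close>, whose kernel is
  one-dimensional unless \<open>N\<close> is diagonal, i.e. unless \<open>cot (\<pi>\<^sup>2/(2\<alpha>)) = 0\<close>, which characterises the
  special angles. The quasi-eigenvalue 0, of multiplicity one by convention, occurs exactly in the
  cases where \<open>sin (\<pi>\<^sup>2/(2\<alpha>)) cos (2\<pi>q/n) = 1\<close>, and the sign of \<open>sin (\<pi>\<^sup>2/(2\<alpha>))\<close> is the parity of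
  the special angle.\<close>

section \<open>2\<times>2 matrices\<close>

definition mat2 :: "'a \<Rightarrow> 'a \<Rightarrow> 'a \<Rightarrow> 'a \<Rightarrow> 'a mat" where
  "mat2 a b c d = mat 2 2 (\<lambda>(i, j). if i = 0 then (if j = 0 then a else b) else (if j = 0 then c else d))"

lemma mat2_carrier [simp]: "mat2 a b c d \<in> carrier_mat 2 2"
  by (simp add: mat2_def)

lemma index_mat2 [simp]:
  "mat2 a b c d $$ (0, 0) = a" "mat2 a b c d $$ (0, 1) = b"
  "mat2 a b c d $$ (1, 0) = c" "mat2 a b c d $$ (1, 1) = d"
  by (simp_all add: mat2_def)

lemma less_2_cases: "(i::nat) < 2 \<longleftrightarrow> i = 0 \<or> i = 1"
  by auto

lemma mat2_eq_iff: "mat2 a b c d = mat2 a' b' c' d' \<longleftrightarrow> a = a' \<and> b = b' \<and> c = c' \<and> d = d'"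
  by (metis index_mat2)

lemma mat2_mult:
  "mat2 a b c d * mat2 a' b' c' d' = mat2 (a*a' + b*c') (a*b' + b*d') (c*a' + d*c') (c*b' + d*d')"
  by (rule eq_matI) (auto simp: less_2_cases scalar_prod_def numeral_2_eq_2 row_def col_def mat2_def)

lemma one_mat2: "1\<^sub>m 2 = mat2 1 0 0 1"
  by (rule eq_matI) (auto simp: less_2_cases mat2_def)

lemma char_matrix_mat2: "char_matrix (mat2 a b c d) e = mat2 (a - e) b c (d - e)"
  by (rule eq_matI) (auto simp: char_matrix_def less_2_cases mat2_def)

lemma det_carrier_mat_1: "A \<in> carrier_mat 1 1 \<Longrightarrow> det A = A $$ (0, 0)"
  using det_upper_triangular[of A 1] by (auto simp: upper_triangular_def diag_mat_def)

lemma det_mat2: "det (mat2 a b c d) = a*d - b*c"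
proof -
  have "det (mat2 a b c d) = (\<Sum>j<2. mat2 a b c d $$ (0, j) * cofactor (mat2 a b c d) 0 j)"
    by (rule laplace_expansion_row) auto
  also have "\<dots> = a*d - b*c"
    by (simp add: numeral_2_eq_2 cofactor_def det_carrier_mat_1 mat_delete_def mat2_def)
  finally show ?thesis .
qed

lemma det_pow_mat: "A \<in> carrier_mat n n \<Longrightarrow> det (A ^\<^sub>m k) = det A ^ k"
  by (induction k) (auto simp: det_mult[of _ n] mult.commute)

lemma eigenvalue_mat2_iff:
  fixes a b c d e :: "'a :: field"
  shows "eigenvalue (mat2 a b c d) e \<longleftrightarrow> (a - e)*(d - e) = b*c"
  by (simp add: eigenvalue_det[OF mat2_carrier] char_matrix_mat2 det_mat2)

lemma kernel_dim_mult_left: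
  assumes "C \<in> carrier_mat n nc" "P \<in> carrier_mat n n" "Q \<in> carrier_mat n n" "Q * P = 1\<^sub>m n"
  shows "kernel_dim (P * C) = kernel_dim C"
  using mat_kernel_mult_eq[OF assms] assms(1,2) by (simp add: kernel_dim_def)

lemma kernel_dim_mult_right:
  assumes "C \<in> carrier_mat nr n" "P \<in> carrier_mat n n" "Q \<in> carrier_mat n n" "P * Q = 1\<^sub>m n"
  shows "kernel_dim (C * P) = kernel_dim C"
  using mat_kernel_dim_mult_eq_right[OF assms] assms(1,2) by (simp add: kernel_dim_def)

lemma kernel_dim_echelon_2:
  assumes "row_echelon_form R" "R \<in> carrier_mat 2 2"
  shows "kernel_dim R = 2 - card {i. i < 2 \<and> row R i \<noteq> 0\<^sub>v 2}"
  using find_base_vectors(6)[OF assms] assms(2) by (simp add: kernel_dim_def)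

lemma kernel_dim_mat2_zero: "kernel_dim (mat2 0 0 0 0 :: 'a :: field mat) = 2"
proof -
  let ?Z = "mat2 0 0 0 0 :: 'a mat"
  have "row_echelon_form ?Z"
    unfolding row_echelon_form_def
    by (rule exI[of _ "\<lambda>_. 2"], rule pivot_funI) (auto simp: mat2_def)
  moreover have "{i. i < 2 \<and> row ?Z i \<noteq> 0\<^sub>v 2} = {}"
    by (auto simp: less_2_cases row_def mat2_def)
  ultimately show ?thesis
    by (metis kernel_dim_echelon_2 mat2_carrier card.empty diff_zero)
qed

lemma kernel_dim_mat2_echelon: "kernel_dim (mat2 1 y 0 0) = 1"
proof -
  have "row_echelon_form (mat2 1 y 0 0)"
    unfolding row_echelon_form_def
    by (rule exI[of _ "\<lambda>i. if i = 0 then 0 else 2"], rule pivot_funI)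
      (auto simp: less_2_cases mat2_def)
  moreover have "row (mat2 1 y 0 0) 0 \<noteq> 0\<^sub>v 2"
    by (metis index_mat2(1) index_row(1) index_zero_vec(1) mat2_carrier carrier_matD zero_less_numeral one_neq_zero)
  moreover have "row (mat2 1 y 0 0) 1 = 0\<^sub>v 2"
    by (rule eq_vecI) (auto simp: row_def mat2_def)
  ultimately have "{i. i < 2 \<and> row (mat2 1 y 0 0) i \<noteq> 0\<^sub>v 2} = {0}" "row_echelon_form (mat2 1 y 0 0)"
    by (auto simp: less_2_cases)
  then show ?thesis
    by (simp add: kernel_dim_echelon_2)
qed

lemma kernel_dim_mat2_pivot:
  fixes a b c d :: "'a :: field"
  assumes "a \<noteq> 0" and "a*d = b*c"
  shows "kernel_dim (mat2 a b c d) = 1"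
proof -
  have inv: "mat2 (1/a) 0 (-c/a) 1 * mat2 a 0 c 1 = 1\<^sub>m 2"
    using assms by (simp add: mat2_mult one_mat2 mat2_eq_iff)
  have "c*b/a = d"
    using assms by (simp add: field_simps)
  then have "kernel_dim (mat2 a b c d) = kernel_dim (mat2 a 0 c 1 * mat2 1 (b/a) 0 0)"
    using assms by (simp add: mat2_mult)
  also have "\<dots> = kernel_dim (mat2 1 (b/a) 0 0)"
    by (rule kernel_dim_mult_left[OF mat2_carrier mat2_carrier mat2_carrier inv])
  finally show ?thesis
    by (simp add: kernel_dim_mat2_echelon)
qed

lemma mat2_swap_square: "mat2 0 1 1 0 * mat2 0 1 1 0 = (1\<^sub>m 2 :: 'a :: semiring_1 mat)"
  by (simp add: mat2_mult one_mat2)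

lemma kernel_dim_mat2_swap_rows: "kernel_dim (mat2 c d a b) = kernel_dim (mat2 a b c (d :: 'a :: field))"
  using kernel_dim_mult_left[OF mat2_carrier mat2_carrier mat2_carrier mat2_swap_square]
  by (simp add: mat2_mult)

lemma kernel_dim_mat2_swap_cols: "kernel_dim (mat2 b a d c) = kernel_dim (mat2 a b c (d :: 'a :: field))"
  using kernel_dim_mult_right[OF mat2_carrier mat2_carrier mat2_carrier mat2_swap_square]
  by (simp add: mat2_mult)

text \<open>Row and column swaps move a nonzero entry of a singular matrix to position (0, 0).\<close>

lemma kernel_dim_mat2:
  fixes a b c d :: "'a :: field"
  assumes "a*d = b*c"
  shows "kernel_dim (mat2 a b c d) = (if a = 0 \<and> b = 0 \<and> c = 0 \<and> d = 0 then 2 else 1)"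
proof -
  consider "a = 0 \<and> b = 0 \<and> c = 0 \<and> d = 0" | "a \<noteq> 0" | "b \<noteq> 0" | "c \<noteq> 0" | "d \<noteq> 0"
    by blast
  then show ?thesis
  proof cases
    case 1
    then show ?thesis by (simp add: kernel_dim_mat2_zero)
  next
    case 2
    then show ?thesis using kernel_dim_mat2_pivot assms by simp
  next
    case 3
    then show ?thesis
      using kernel_dim_mat2_pivot[where a = b and b = a and c = d and d = c] kernel_dim_mat2_swap_cols[of a b c d] assms
      by (simp add: mult.commute)
  next
    case 4
    then show ?thesis
      using kernel_dim_mat2_pivot[where a = c and b = d and c = a and d = b] kernel_dim_mat2_swap_rows[of a b c d] assms
      by (simp add: mult.commute)
  next
    case 5
    then show ?thesis
      using kernel_dim_mat2_pivot[where a = d and b = c and c = b and d = a] kernel_dim_mat2_swap_cols[of c d a b]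
        kernel_dim_mat2_swap_rows[of a b c d] assms
      by (simp add: mult.commute)
  qed
qed

lemma kernel_dim_parabolic_mat2:
  fixes a b c d e t :: "'a :: field"
  assumes det: "a*d - b*c = 1" and tr: "a + d = 2*e" and "e*e = 1" and "t \<noteq> 0"
  shows "kernel_dim (mat2 (t*(a - e)) (t*b) (t*c) (t*(d - e))) = (if b = 0 \<and> c = 0 then 2 else 1)"
proof -
  have "(a - e)*(d - e) = (a*d - b*c) + b*c - e*(a + d) + e*e"
    by (simp add: algebra_simps)
  also have "\<dots> = b*c"
    using det tr \<open>e*e = 1\<close> by (simp add: algebra_simps)
  finally have singular: "(a - e)*(d - e) = b*c" .
  have "a = e \<and> d = e" if "b = 0" "c = 0"
  proof -
    have "d - e = -(a - e)"
      using tr by (simp add: algebra_simps)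
    then have "(a - e)*(a - e) = 0"
      using singular that by auto
    then show ?thesis
      using \<open>d - e = -(a - e)\<close> by auto
  qed
  moreover have "(t*(a - e)) * (t*(d - e)) = (t*b) * (t*c)"
  proof -
    have "(t*(a - e)) * (t*(d - e)) = t*t*((a - e)*(d - e))"
      by (simp add: algebra_simps)
    then show ?thesis
      unfolding singular by (simp add: algebra_simps)
  qed
  ultimately show ?thesis
    using \<open>t \<noteq> 0\<close> by (auto simp: kernel_dim_mat2)
qed

section \<open>Lucas sequences\<close>

fun lucas_U :: "'a :: comm_ring_1 \<Rightarrow> nat \<Rightarrow> 'a" where
  "lucas_U \<tau> 0 = 0"
| "lucas_U \<tau> (Suc 0) = 1"
| "lucas_U \<tau> (Suc (Suc n)) = \<tau> * lucas_U \<tau> (Suc n) - lucas_U \<tau> n"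

fun lucas_V :: "'a :: comm_ring_1 \<Rightarrow> nat \<Rightarrow> 'a" where
  "lucas_V \<tau> 0 = 2"
| "lucas_V \<tau> (Suc 0) = \<tau>"
| "lucas_V \<tau> (Suc (Suc n)) = \<tau> * lucas_V \<tau> (Suc n) - lucas_V \<tau> n"

lemma linear_recurrence_eq:
  fixes f g :: "nat \<Rightarrow> 'a :: comm_ring_1"
  assumes "\<And>n. f (Suc (Suc n)) = \<tau> * f (Suc n) - f n"
    and "\<And>n. g (Suc (Suc n)) = \<tau> * g (Suc n) - g n"
    and "f 0 = g 0" and "f 1 = g 1"
  shows "f n = g n"
proof -
  have "f n = g n \<and> f (Suc n) = g (Suc n)"
    by (induction n) (use assms in auto)
  then show ?thesis ..
qed

lemma lucas_V_Suc: "lucas_V \<tau> (Suc n) = \<tau> * lucas_U \<tau> (Suc n) - 2 * lucas_U \<tau> n"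
  by (rule linear_recurrence_eq[where \<tau> = \<tau>]) (auto simp: algebra_simps)

lemma of_real_lucas_U: "of_real (lucas_U \<tau> n) = lucas_U (of_real \<tau>) n"
  by (induction \<tau> n rule: lucas_U.induct) auto

lemma of_real_lucas_V: "of_real (lucas_V \<tau> n) = lucas_V (of_real \<tau>) n"
  by (induction \<tau> n rule: lucas_V.induct) auto

lemma lucas_U_cos: "lucas_U (2 * cos \<phi>) n * sin \<phi> = sin (real n * \<phi>)"
proof (rule linear_recurrence_eq[where \<tau> = "2 * cos \<phi>"])
  show "sin (real (Suc (Suc n)) * \<phi>) = 2 * cos \<phi> * sin (real (Suc n) * \<phi>) - sin (real n * \<phi>)" for n
    using sin_add[of "real (Suc n) * \<phi>" \<phi>] sin_diff[of "real (Suc n) * \<phi>" \<phi>]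
    by (simp add: algebra_simps)
qed (auto simp: algebra_simps)

lemma lucas_V_cos: "lucas_V (2 * cos \<phi>) n = 2 * cos (real n * \<phi>)"
proof (rule linear_recurrence_eq[where \<tau> = "2 * cos \<phi>"])
  show "2 * cos (real (Suc (Suc n)) * \<phi>) = 2 * cos \<phi> * (2 * cos (real (Suc n) * \<phi>)) - 2 * cos (real n * \<phi>)" for n
    using cos_add[of "real (Suc n) * \<phi>" \<phi>] cos_diff[of "real (Suc n) * \<phi>" \<phi>]
    by (simp add: algebra_simps)
qed (auto simp: algebra_simps)

lemma lucas_U_sign:
  assumes "\<epsilon> = 1 \<or> \<epsilon> = -1"
  shows "lucas_U (2 * \<epsilon>) n = \<epsilon> ^ Suc n * of_nat n"
  by (rule linear_recurrence_eq[where \<tau> = "2 * \<epsilon>"]) (use assms in \<open>auto simp: algebra_simps\<close>)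

lemma lucas_V_sign:
  assumes "\<epsilon> = 1 \<or> \<epsilon> = -1"
  shows "lucas_V (2 * \<epsilon>) n = 2 * \<epsilon> ^ n"
  by (rule linear_recurrence_eq[where \<tau> = "2 * \<epsilon>"]) (use assms in \<open>auto simp: algebra_simps\<close>)

lemma lucas_U_cos_full_turn:
  assumes "sin \<phi> \<noteq> 0" and "cos (real (Suc k) * \<phi>) = 1"
  shows "lucas_U (2 * cos \<phi>) (Suc k) = 0" and "lucas_U (2 * cos \<phi>) k = -1"
proof -
  have "sin (real (Suc k) * \<phi>) = 0"
    using assms(2) sin_cos_squared_add[of "real (Suc k) * \<phi>"] by simp
  then show "lucas_U (2 * cos \<phi>) (Suc k) = 0"
    using lucas_U_cos[of \<phi> "Suc k"] assms(1) by simp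
  have "lucas_U (2 * cos \<phi>) k * sin \<phi> = sin (real (Suc k) * \<phi> - \<phi>)"
    using lucas_U_cos[of \<phi> k] by (simp add: algebra_simps)
  also have "\<dots> = - sin \<phi>"
    using assms(2) \<open>sin (real (Suc k) * \<phi>) = 0\<close> by (simp add: sin_diff)
  finally show "lucas_U (2 * cos \<phi>) k = -1"
    using assms(1) by (metis mult_cancel_right mult_minus1)
qed

lemma abs_lucas_V_gt_2:
  fixes \<tau> :: real
  assumes "\<bar>\<tau>\<bar> > 2" and "n \<ge> 1"
  shows "\<bar>lucas_V \<tau> n\<bar> > 2"
proof -
  have grow: "\<bar>lucas_V \<tau> k\<bar> < \<bar>lucas_V \<tau> (Suc k)\<bar>" for k
  proof (induction k)
    case 0
    then show ?case using assms by simp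
  next
    case (Suc k)
    have "2 * \<bar>lucas_V \<tau> (Suc k)\<bar> \<le> \<bar>\<tau>\<bar> * \<bar>lucas_V \<tau> (Suc k)\<bar>"
      using assms(1) by (intro mult_right_mono) auto
    then show ?case
      using Suc.IH abs_triangle_ineq2[of "\<tau> * lucas_V \<tau> (Suc k)" "lucas_V \<tau> k"] by (simp add: abs_mult)
  qed
  then have ge_2: "2 \<le> \<bar>lucas_V \<tau> k\<bar>" for k
    by (induction k) (auto intro: less_imp_le order.trans)
  obtain k where "n = Suc k"
    using assms(2) by (cases n) auto
  then show ?thesis
    using ge_2[of k] grow[of k] by simp
qed

lemma lucas_V_eq_2_iff:
  fixes \<tau> :: real
  assumes "n \<ge> 1"
  shows "lucas_V \<tau> n = 2 \<longleftrightarrow> (\<exists>q. 2*q \<le> n \<and> \<tau> = 2 * cos (2*pi*real q/real n))"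
proof
  assume V: "lucas_V \<tau> n = 2"
  then have "\<not> \<bar>\<tau>\<bar> > 2"
    using abs_lucas_V_gt_2[of \<tau> n] assms by auto
  then have "\<bar>\<tau>/2\<bar> \<le> 1"
    by simp
  define \<phi> where "\<phi> = arccos (\<tau>/2)"
  have \<tau>: "\<tau> = 2 * cos \<phi>" and \<phi>: "0 \<le> \<phi>" "\<phi> \<le> pi"
    using \<open>\<bar>\<tau>/2\<bar> \<le> 1\<close> arccos_bounded[of "\<tau>/2"] by (auto simp: \<phi>_def)
  have "cos (real n * \<phi>) = 1"
    using V by (simp add: \<tau> lucas_V_cos)
  then obtain k :: int where k: "real n * \<phi> = real_of_int k * 2 * pi"
    by (auto simp: cos_one_2pi_int)
  have "0 \<le> real_of_int k * 2 * pi"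
    using k \<phi> by (metis mult_nonneg_nonneg of_nat_0_le_iff)
  then have "0 \<le> k"
    using pi_gt_zero by (simp add: zero_le_mult_iff)
  have "real_of_int k * 2 * pi \<le> real n * pi"
    using k mult_left_mono[OF \<open>\<phi> \<le> pi\<close>, of "real n"] by simp
  then have "real_of_int k * 2 \<le> real n"
    by simp
  then have "2 * nat k \<le> n" and "\<phi> = 2*pi*real (nat k)/real n"
    using k assms \<open>0 \<le> k\<close> by (simp_all add: field_simps)
  then show "\<exists>q. 2*q \<le> n \<and> \<tau> = 2 * cos (2*pi*real q/real n)"
    using \<tau> by blast
next
  assume "\<exists>q. 2*q \<le> n \<and> \<tau> = 2 * cos (2*pi*real q/real n)"
  then obtain q where "\<tau> = 2 * cos (2*pi*real q/real n)"
    by blast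
  then show "lucas_V \<tau> n = 2"
    using assms cos_int_2pin[of "int q"] by (simp add: lucas_V_cos)
qed

section \<open>Powers of unimodular 2\<times>2 matrices\<close>

text \<open>Cayley--Hamilton in the form \<open>N\<^sup>2 = (a + d) N - 1\<close>.\<close>

lemma mat2_power_step:
  fixes a b c d :: "'a :: comm_ring_1"
  assumes "a*d - b*c = 1"
  shows "mat2 (u*a - v) (u*b) (u*c) (u*d - v) * mat2 a b c d =
    mat2 (((a + d)*u - v)*a - u) (((a + d)*u - v)*b) (((a + d)*u - v)*c) (((a + d)*u - v)*d - u)"
proof -
  have "b * c = a * d - 1"
    using assms by (simp add: algebra_simps)
  then have bc: "b * (c * x) = a * (d * x) - x" for x
    by (metis left_diff_distrib mult.assoc mult_1)
  show ?thesis
    by (simp add: mat2_mult mat2_eq_iff algebra_simps bc)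
qed

lemma mat2_power_Suc:
  fixes a b c d :: "'a :: comm_ring_1"
  assumes det: "a*d - b*c = 1"
  defines "U \<equiv> lucas_U (a + d)"
  shows "mat2 a b c d ^\<^sub>m Suc n =
    mat2 (U (Suc n) * a - U n) (U (Suc n) * b) (U (Suc n) * c) (U (Suc n) * d - U n)"
proof (induction n)
  case 0
  then show ?case by (simp add: U_def one_mat2 mat2_mult)
next
  case (Suc n)
  then show ?case
    unfolding pow_mat.simps(2)[of _ "Suc n"] Suc mat2_power_step[OF det] U_def by simp
qed

text \<open>For \<open>det M = 1\<close> one has \<open>det (M - 1) = 2 - trace M\<close>, and \<open>trace (N\<^sup>n) = V\<^sub>n(trace N)\<close>.\<close>

lemma eigenvalue_one_mat2_power_iff:
  fixes a b c d :: "'a :: field"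
  assumes det: "a*d - b*c = 1"
  shows "eigenvalue (mat2 a b c d ^\<^sub>m Suc n) 1 \<longleftrightarrow> lucas_V (a + d) (Suc n) = 2"
proof -
  define U where "U = lucas_U (a + d)"
  define A B C D where "A = U (Suc n) * a - U n" and "B = U (Suc n) * b"
    and "C = U (Suc n) * c" and "D = U (Suc n) * d - U n"
  have pow: "mat2 a b c d ^\<^sub>m Suc n = mat2 A B C D"
    unfolding A_def B_def C_def D_def U_def by (rule mat2_power_Suc[OF det])
  have "A*D - B*C = det (mat2 a b c d ^\<^sub>m Suc n)"
    by (simp only: pow det_mat2)
  also have "\<dots> = 1"
    using det det_pow_mat[OF mat2_carrier, of a b c d "Suc n"] by (simp only: det_mat2 power_one)
  finally have "A*D - B*C = 1" .
  moreover have "A + D = lucas_V (a + d) (Suc n)"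
    unfolding A_def D_def U_def lucas_V_Suc by (simp add: algebra_simps)
  ultimately have char: "(A - 1) * (D - 1) - B*C = 2 - lucas_V (a + d) (Suc n)"
    by (simp add: algebra_simps)
  have "eigenvalue (mat2 a b c d ^\<^sub>m Suc n) 1 \<longleftrightarrow> (A - 1) * (D - 1) - B*C = 0"
    by (simp only: pow eigenvalue_mat2_iff right_minus_eq)
  also have "\<dots> \<longleftrightarrow> lucas_V (a + d) (Suc n) = 2"
    unfolding char by simp
  finally show ?thesis .
qed

text \<open>If \<open>sin \<phi> \<noteq> 0\<close> then \<open>N\<^sup>n = 1\<close>. Otherwise \<open>cos \<phi> = \<epsilon> = \<plusminus>1\<close> and \<open>N\<^sup>n - 1 = \<epsilon> n (N - \<epsilon>)\<close>.\<close>

lemma dim_gen_eigenspace_one_mat2_power: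
  fixes a b c d :: "'a :: real_field"
  assumes det: "a*d - b*c = 1" and tr: "a + d = of_real (2 * cos \<phi>)"
    and ev: "cos (real n * \<phi>) = 1" and "n \<ge> 1"
  shows "dim_gen_eigenspace (mat2 a b c d ^\<^sub>m n) 1 1 = (if sin \<phi> = 0 \<and> (b \<noteq> 0 \<or> c \<noteq> 0) then 1 else 2)"
proof -
  obtain k where n: "n = Suc k"
    using \<open>n \<ge> 1\<close> by (cases n) auto
  define U where "U = lucas_U (2 * cos \<phi>)"
  have "dim_gen_eigenspace (mat2 a b c d ^\<^sub>m n) 1 1 =
    kernel_dim (mat2 (of_real (U n) * a - of_real (U k) - 1) (of_real (U n) * b)
      (of_real (U n) * c) (of_real (U n) * d - of_real (U k) - 1))"
    unfolding dim_gen_eigenspace_def n mat2_power_Suc[OF det]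
    by (simp add: char_matrix_mat2 tr U_def of_real_lucas_U)
  also have "\<dots> = (if sin \<phi> = 0 \<and> (b \<noteq> 0 \<or> c \<noteq> 0) then 1 else 2)"
  proof (cases "sin \<phi> = 0")
    case False
    then show ?thesis
      using lucas_U_cos_full_turn[OF False ev[unfolded n]] kernel_dim_mat2_zero by (simp add: U_def n)
  next
    case True
    define \<epsilon> where "\<epsilon> = cos \<phi>"
    have \<epsilon>: "\<epsilon> = 1 \<or> \<epsilon> = -1"
      using True sin_cos_squared_add[of \<phi>] by (simp add: \<epsilon>_def power2_eq_1_iff)
    have "2 * \<epsilon> ^ n = 2"
      using lucas_V_sign[OF \<epsilon>, of n] lucas_V_cos[of \<phi> n] ev by (simp add: \<epsilon>_def)
    then have "U n = \<epsilon> * real n" and "U k = real n - 1"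
      using lucas_U_sign[OF \<epsilon>] by (simp_all add: U_def \<epsilon>_def[symmetric] n)
    define e :: 'a where "e = of_real \<epsilon>"
    define m :: 'a where "m = of_real (real n)"
    have "e * e = 1" and "e * m \<noteq> 0" and "a + d = 2 * e"
      using \<epsilon> \<open>n \<ge> 1\<close> tr by (auto simp: e_def m_def \<epsilon>_def)
    have Un: "of_real (U n) = e*m" and Uk: "of_real (U k) = m - 1"
      using \<open>U n = \<epsilon> * real n\<close> \<open>U k = real n - 1\<close> by (simp_all add: e_def m_def)
    have shift: "e*m*x - (m - 1) - 1 = e*m*(x - e)" for x
    proof -
      have "e*m*(x - e) = e*m*x - (e*e)*m"
        by (simp add: algebra_simps)
      then show ?thesis
        using \<open>e * e = 1\<close> by simp
    qed
    show ?thesis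
      unfolding Un Uk shift
      using kernel_dim_parabolic_mat2[OF det \<open>a + d = 2 * e\<close> \<open>e * e = 1\<close> \<open>e * m \<noteq> 0\<close>] True
      by simp
  qed
  finally show ?thesis .
qed

section \<open>Elementary trigonometry\<close>

lemma two_pi_frac_bounds:
  assumes "2*q \<le> n"
  shows "0 \<le> 2*pi*real q/real n" and "2*pi*real q/real n \<le> pi"
proof -
  show "0 \<le> 2*pi*real q/real n" by simp
  have "2*pi*real q \<le> pi * real n"
    using assms by (simp add: mult.commute mult_left_mono flip: of_nat_mult)
  then show "2*pi*real q/real n \<le> pi"
    by (cases "n = 0") (simp_all add: field_simps)
qed

lemma cos_two_pi_frac_eq_1_iff:
  assumes "2*q \<le> n"
  shows "cos (2*pi*real q/real n) = 1 \<longleftrightarrow> q = 0"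
  using cos_inj_pi[OF two_pi_frac_bounds[OF assms], of 0] assms by auto

lemma cos_two_pi_frac_eq_minus_1_iff:
  assumes "2*q \<le> n" and "n \<ge> 1"
  shows "cos (2*pi*real q/real n) = -1 \<longleftrightarrow> 2*q = n"
proof -
  have "cos (2*pi*real q/real n) = -1 \<longleftrightarrow> 2*pi*real q/real n = pi"
    using cos_inj_pi[OF two_pi_frac_bounds[OF assms(1)], of pi] by auto
  also have "\<dots> \<longleftrightarrow> real (2*q) = real n"
    using assms(2) by (simp add: field_simps)
  also have "\<dots> \<longleftrightarrow> 2*q = n"
    by (rule of_nat_eq_iff)
  finally show ?thesis .
qed

lemma sin_two_pi_frac_eq_0_iff:
  assumes "2*q \<le> n" and "n \<ge> 1"
  shows "sin (2*pi*real q/real n) = 0 \<longleftrightarrow> q = 0 \<or> 2*q = n"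
proof -
  have "(sin (2*pi*real q/real n))\<^sup>2 = 1 - (cos (2*pi*real q/real n))\<^sup>2"
    using sin_cos_squared_add[of "2*pi*real q/real n"] by linarith
  then have "sin (2*pi*real q/real n) = 0 \<longleftrightarrow> (cos (2*pi*real q/real n))\<^sup>2 = 1"
    by (metis power_zero_numeral right_minus_eq zero_eq_power2)
  then show ?thesis
    using cos_two_pi_frac_eq_1_iff[OF assms(1)] cos_two_pi_frac_eq_minus_1_iff[OF assms]
    by (auto simp: power2_eq_1_iff)
qed

lemma cos_eq_0_iff_sin: "cos (x::real) = 0 \<longleftrightarrow> sin x = 1 \<or> sin x = -1"
proof -
  have "(cos x)\<^sup>2 = 1 - (sin x)\<^sup>2"
    using sin_cos_squared_add[of x] by linarith
  then have "cos x = 0 \<longleftrightarrow> (sin x)\<^sup>2 = 1"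
    by (metis diff_self right_minus_eq zero_eq_power2)
  then show ?thesis
    by (simp add: power2_eq_1_iff)
qed

lemma mult_eq_1_iff_abs_le_1:
  fixes u v :: real
  assumes "\<bar>u\<bar> \<le> 1" and "\<bar>v\<bar> \<le> 1"
  shows "u * v = 1 \<longleftrightarrow> (u = 1 \<and> v = 1) \<or> (u = -1 \<and> v = -1)"
proof
  assume "u * v = 1"
  then have "\<bar>u\<bar> * \<bar>v\<bar> = 1"
    by (metis abs_mult abs_one)
  then have "\<bar>u\<bar> = 1" and "\<bar>v\<bar> = 1"
    using assms mult_le_one[of "\<bar>u\<bar>" "\<bar>v\<bar>"] mult_left_mono[of "\<bar>v\<bar>" 1 "\<bar>u\<bar>"]
      mult_right_mono[of "\<bar>u\<bar>" 1 "\<bar>v\<bar>"]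
    by auto
  with \<open>u * v = 1\<close> show "(u = 1 \<and> v = 1) \<or> (u = -1 \<and> v = -1)"
    by (auto simp: abs_if split: if_splits)
qed auto

lemma abs_sin_mult_cos_le_1: "\<bar>sin x * cos y\<bar> \<le> (1::real)"
  unfolding abs_mult by (rule mult_le_one) auto

lemma cos_arccos_2pi:
  assumes "\<bar>y\<bar> \<le> 1" and "s \<in> {-1, 1}"
  shows "cos (s * arccos y + 2*pi*real m) = y"
  using assms cos_int_2pin[of "int m"] sin_int_2pin[of "int m"] by (auto simp: cos_add cos_arccos_abs)

lemma cos_eq_iff_arccos:
  fixes \<theta> y :: real
  assumes "0 \<le> \<theta>" and "\<bar>y\<bar> \<le> 1"
  shows "cos \<theta> = y \<longleftrightarrow> (\<exists>s m. s \<in> {-1, 1} \<and> \<theta> = s * arccos y + 2*pi*real m)"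
proof
  assume "cos \<theta> = y"
  obtain k :: int where k: "arccos y = \<bar>\<theta> - of_int k * (2*pi)\<bar>"
    using arccos_cos_eq_abs_2pi[of \<theta>] \<open>cos \<theta> = y\<close> by metis
  then have "\<theta> = 1 * arccos y + 2*pi*of_int k \<or> \<theta> = (-1) * arccos y + 2*pi*of_int k"
    by (auto simp: abs_if algebra_simps split: if_splits)
  then obtain s :: real where s: "s \<in> {-1, 1}" and \<theta>: "\<theta> = s * arccos y + 2*pi*of_int k"
    by blast
  have "s * arccos y \<le> pi"
    using s assms(2) arccos_lbound[of y] arccos_ubound[of y] by (auto simp: abs_le_iff)
  then have "0 \<le> pi * (1 + 2 * of_int k)"
    using assms(1) \<theta> by (simp add: algebra_simps)
  then have "0 \<le> 1 + 2 * real_of_int k"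
    using pi_gt_zero by (simp add: zero_le_mult_iff)
  then have "0 \<le> k"
    by linarith
  with s \<theta> show "\<exists>s m. s \<in> {-1, 1} \<and> \<theta> = s * arccos y + 2*pi*real m"
    by (intro exI[of _ s] exI[of _ "nat k"]) simp
next
  assume "\<exists>s m. s \<in> {-1, 1} \<and> \<theta> = s * arccos y + 2*pi*real m"
  then show "cos \<theta> = y"
    using cos_arccos_2pi[OF assms(2)] by blast
qed

section \<open>Special and exceptional angles\<close>

abbreviation corner_phase :: "real \<Rightarrow> real" where
  "corner_phase \<alpha> \<equiv> pi^2 / (2 * \<alpha>)"

lemma corner_phase_gt: "0 < \<alpha> \<Longrightarrow> \<alpha> < pi \<Longrightarrow> pi/2 < corner_phase \<alpha>"
  by (simp add: field_simps power2_eq_square)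

lemma corner_phase_eq_iff:
  assumes "0 < \<alpha>"
  shows "corner_phase \<alpha> = r * (pi/2) \<longleftrightarrow> \<alpha> * r = pi"
proof -
  have "corner_phase \<alpha> = r * (pi/2) \<longleftrightarrow> pi * pi = pi * (\<alpha> * r)"
    using assms by (auto simp: field_simps power2_eq_square)
  then show ?thesis
    by auto
qed

lemma sin_corner_phase_nonzero:
  assumes "0 < \<alpha>" and "\<alpha> < pi" and "\<not> exceptional_angle \<alpha>"
  shows "sin (corner_phase \<alpha>) \<noteq> 0"
proof
  assume "sin (corner_phase \<alpha>) = 0"
  then obtain i :: int where "even i" and i: "corner_phase \<alpha> = of_int i * (pi/2)"
    by (auto simp: sin_zero_iff_int)
  then obtain j where j: "i = 2 * j"
    by blast
  have "\<alpha> * of_int i = pi"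
    by (rule iffD1[OF corner_phase_eq_iff[OF assms(1)] i])
  moreover have "0 < j"
    using corner_phase_gt[OF assms(1,2)] i j by (simp add: zero_less_mult_iff)
  ultimately have "\<alpha> = pi / (2 * real (nat j))" and "nat j \<ge> 1"
    using j by (simp_all add: field_simps)
  then show False
    using assms(3) unfolding exceptional_angle_def by blast
qed

lemma corner_phase_special:
  assumes "\<alpha> = pi / (2 * real k + 1)"
  shows "sin (corner_phase \<alpha>) = (-1)^k" and "cos (corner_phase \<alpha>) = 0"
proof -
  have "corner_phase \<alpha> = (2 * real k + 1) * (pi/2)"
    by (rule iffD2[OF corner_phase_eq_iff]) (simp_all add: assms)
  then have "corner_phase \<alpha> = real k * pi + pi/2"
    by (simp add: algebra_simps)
  then show "sin (corner_phase \<alpha>) = (-1)^k" and "cos (corner_phase \<alpha>) = 0"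
    by (simp_all add: sin_add cos_add)
qed

lemma cos_corner_phase_eq_0_iff:
  assumes "0 < \<alpha>" and "\<alpha> < pi"
  shows "cos (corner_phase \<alpha>) = 0 \<longleftrightarrow> special_angle \<alpha>"
proof
  assume "cos (corner_phase \<alpha>) = 0"
  then obtain i :: int where "odd i" and i: "corner_phase \<alpha> = of_int i * (pi/2)"
    by (auto simp: cos_zero_iff_int)
  then obtain j where j: "i = 2*j + 1"
    by (auto elim: oddE)
  have "\<alpha> * of_int i = pi"
    by (rule iffD1[OF corner_phase_eq_iff[OF assms(1)] i])
  moreover have "0 < j"
    using corner_phase_gt[OF assms] i j by simp
  ultimately have "\<alpha> = pi / (2 * real (nat j) + 1)" and "nat j \<ge> 1"
    using j by (simp_all add: field_simps)
  then show "special_angle \<alpha>"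
    unfolding special_angle_def by blast
next
  assume "special_angle \<alpha>"
  then obtain k where "\<alpha> = pi / (2 * real k + 1)"
    unfolding special_angle_def by blast
  then show "cos (corner_phase \<alpha>) = 0"
    by (rule corner_phase_special(2))
qed

lemma even_special_angle_iff:
  assumes "0 < \<alpha>" and "\<alpha> < pi"
  shows "even_special_angle \<alpha> \<longleftrightarrow> sin (corner_phase \<alpha>) = 1"
proof -
  have "even_special_angle \<alpha> \<longleftrightarrow> (\<exists>k. k \<ge> 1 \<and> \<alpha> = pi / (2 * real k + 1) \<and> sin (corner_phase \<alpha>) = 1)"
    unfolding even_special_angle_def using corner_phase_special(1)
    by (auto simp: minus_one_power_iff split: if_splits)
  also have "\<dots> \<longleftrightarrow> special_angle \<alpha> \<and> sin (corner_phase \<alpha>) = 1"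
    unfolding special_angle_def by blast
  also have "\<dots> \<longleftrightarrow> sin (corner_phase \<alpha>) = 1"
    using cos_eq_0_iff_sin cos_corner_phase_eq_0_iff[OF assms] by auto
  finally show ?thesis .
qed

lemma odd_special_angle_iff:
  assumes "0 < \<alpha>" and "\<alpha> < pi"
  shows "odd_special_angle \<alpha> \<longleftrightarrow> sin (corner_phase \<alpha>) = -1"
proof -
  have "odd_special_angle \<alpha> \<longleftrightarrow> (\<exists>k. k \<ge> 1 \<and> \<alpha> = pi / (2 * real k + 1) \<and> sin (corner_phase \<alpha>) = -1)"
    unfolding odd_special_angle_def using corner_phase_special(1)
    by (auto simp: minus_one_power_iff split: if_splits)
  also have "\<dots> \<longleftrightarrow> special_angle \<alpha> \<and> sin (corner_phase \<alpha>) = -1"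
    unfolding special_angle_def by blast
  also have "\<dots> \<longleftrightarrow> sin (corner_phase \<alpha>) = -1"
    using cos_eq_0_iff_sin cos_corner_phase_eq_0_iff[OF assms] by auto
  finally show ?thesis .
qed

section \<open>The quasi-regular polygon\<close>

lemma A_mat_eq_mat2:
  "A_mat \<alpha> = mat2 (of_real (1 / sin (corner_phase \<alpha>))) (-\<i> * of_real (cot (corner_phase \<alpha>)))
    (\<i> * of_real (cot (corner_phase \<alpha>))) (of_real (1 / sin (corner_phase \<alpha>)))"
  unfolding A_mat_def Let_def
  by (rule eq_matI) (auto simp: mat_of_rows_list_def less_2_cases mat2_def)

lemma B_mat_eq_mat2: "B_mat l \<sigma> = mat2 (cis (l*\<sigma>)) 0 0 (cis (-(l*\<sigma>)))"
  unfolding B_mat_def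
  by (rule eq_matI) (auto simp: mat_of_rows_list_def less_2_cases mat2_def cis_conv_exp)

lemma A_mat_times_B_mat:
  assumes "sin (corner_phase \<alpha>) \<noteq> 0"
  obtains a b c d where "A_mat \<alpha> * B_mat l \<sigma> = mat2 a b c d" and "a*d - b*c = 1"
    and "a + d = of_real (2 * cos (l*\<sigma>) / sin (corner_phase \<alpha>))"
    and "b = 0 \<longleftrightarrow> cos (corner_phase \<alpha>) = 0" and "c = 0 \<longleftrightarrow> cos (corner_phase \<alpha>) = 0"
proof -
  define x where "x = corner_phase \<alpha>"
  define s t :: complex where "s = of_real (1 / sin x)" and "t = of_real (cot x)"
  have "1 / sin x * (1 / sin x) - cot x * cot x = 1"
    using assms sin_cos_squared_add[of x] by (simp add: x_def cot_def field_simps power2_eq_square)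
  then have "s*s - t*t = 1"
    unfolding s_def t_def by (metis of_real_1 of_real_diff of_real_mult)
  moreover have "(s * cis (l*\<sigma>)) * (s * cis (-(l*\<sigma>))) - (-\<i> * t * cis (-(l*\<sigma>))) * (\<i> * t * cis (l*\<sigma>))
      = (s*s - t*t) * (cis (l*\<sigma>) * cis (-(l*\<sigma>)))"
    by (simp add: algebra_simps)
  ultimately have "(s * cis (l*\<sigma>)) * (s * cis (-(l*\<sigma>))) - (-\<i> * t * cis (-(l*\<sigma>))) * (\<i> * t * cis (l*\<sigma>)) = 1"
    by (simp add: cis_mult)
  moreover have "s * cis (l*\<sigma>) + s * cis (-(l*\<sigma>)) = of_real (2 * cos (l*\<sigma>) / sin x)"
    by (simp add: s_def complex_eq_iff)
  moreover have "t = 0 \<longleftrightarrow> cos x = 0"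
    using assms by (simp add: t_def cot_def x_def)
  ultimately show ?thesis
    using that[of "s * cis (l*\<sigma>)" "-\<i> * t * cis (-(l*\<sigma>))" "\<i> * t * cis (l*\<sigma>)" "s * cis (-(l*\<sigma>))"]
    by (simp add: A_mat_eq_mat2 B_mat_eq_mat2 mat2_mult s_def t_def x_def mult.assoc)
qed

lemma T_mat_replicate: "T_mat (replicate n (\<alpha>, l)) \<sigma> = (A_mat \<alpha> * B_mat l \<sigma>) ^\<^sub>m n"
proof -
  define N where "N = A_mat \<alpha> * B_mat l \<sigma>"
  have N: "N \<in> carrier_mat 2 2"
    by (simp add: N_def A_mat_eq_mat2 B_mat_eq_mat2 mat2_mult)
  have "foldl (\<lambda>M (\<alpha>, l). A_mat \<alpha> * B_mat l \<sigma> * M) Z (replicate n (\<alpha>, l)) = N ^\<^sub>m n * Z"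
    if "Z \<in> carrier_mat 2 2" for Z
    using that
  proof (induction n arbitrary: Z)
    case 0
    then show ?case using N by simp
  next
    case (Suc n)
    then have "foldl (\<lambda>M (\<alpha>, l). A_mat \<alpha> * B_mat l \<sigma> * M) Z (replicate (Suc n) (\<alpha>, l)) = N ^\<^sub>m n * (N * Z)"
      using N by (simp add: N_def)
    also have "\<dots> = N ^\<^sub>m Suc n * Z"
      using N Suc.prems by (simp add: assoc_mult_mat[of _ 2 2 _ 2 _ 2])
    finally show ?case .
  qed
  from this[of "1\<^sub>m 2"] show ?thesis
    unfolding T_mat_def N_def[symmetric] using N by simp
qed

lemma eigenvalue_one_T_quasi_regular_iff:
  assumes "sin (corner_phase \<alpha>) \<noteq> 0" and "n \<ge> 1"
  shows "eigenvalue (T_mat (quasi_regular n \<alpha> l) \<sigma>) 1 \<longleftrightarrow>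
    (\<exists>q. 2*q \<le> n \<and> cos (l*\<sigma>) = sin (corner_phase \<alpha>) * cos (2*pi*real q/real n))"
proof -
  obtain a b c d where AB: "A_mat \<alpha> * B_mat l \<sigma> = mat2 a b c d" and det: "a*d - b*c = 1"
    and tr: "a + d = of_real (2 * cos (l*\<sigma>) / sin (corner_phase \<alpha>))"
    and "b = 0 \<longleftrightarrow> cos (corner_phase \<alpha>) = 0" and "c = 0 \<longleftrightarrow> cos (corner_phase \<alpha>) = 0"
    by (rule A_mat_times_B_mat[OF assms(1)])
  obtain k where n: "n = Suc k"
    using assms(2) by (cases n) auto
  have T: "T_mat (quasi_regular n \<alpha> l) \<sigma> = mat2 a b c d ^\<^sub>m Suc k"
    by (simp only: quasi_regular_def T_mat_replicate AB n)
  have V: "lucas_V (a + d) n = of_real (lucas_V (2 * cos (l*\<sigma>) / sin (corner_phase \<alpha>)) n)"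
    unfolding tr of_real_lucas_V ..
  have "eigenvalue (T_mat (quasi_regular n \<alpha> l) \<sigma>) 1 \<longleftrightarrow> lucas_V (a + d) n = 2"
    unfolding n T[unfolded n] by (rule eigenvalue_one_mat2_power_iff[OF det])
  also have "\<dots> \<longleftrightarrow> lucas_V (2 * cos (l*\<sigma>) / sin (corner_phase \<alpha>)) n = 2"
    unfolding V by (metis of_real_eq_iff of_real_numeral)
  also have "\<dots> \<longleftrightarrow> (\<exists>q. 2*q \<le> n \<and> cos (l*\<sigma>) = sin (corner_phase \<alpha>) * cos (2*pi*real q/real n))"
    using assms by (simp add: lucas_V_eq_2_iff field_simps)
  finally show ?thesis .
qed

lemma dim_gen_eigenspace_one_T_quasi_regular:
  assumes "sin (corner_phase \<alpha>) \<noteq> 0" and "n \<ge> 1" and "2*q \<le> n"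
    and "cos (l*\<sigma>) = sin (corner_phase \<alpha>) * cos (2*pi*real q/real n)"
  shows "dim_gen_eigenspace (T_mat (quasi_regular n \<alpha> l) \<sigma>) 1 1 =
    (if (q = 0 \<or> 2*q = n) \<and> cos (corner_phase \<alpha>) \<noteq> 0 then 1 else 2)"
proof -
  obtain a b c d where AB: "A_mat \<alpha> * B_mat l \<sigma> = mat2 a b c d" and det: "a*d - b*c = 1"
    and tr: "a + d = of_real (2 * cos (l*\<sigma>) / sin (corner_phase \<alpha>))"
    and "b = 0 \<longleftrightarrow> cos (corner_phase \<alpha>) = 0" and "c = 0 \<longleftrightarrow> cos (corner_phase \<alpha>) = 0"
    by (rule A_mat_times_B_mat[OF assms(1)])
  have "a + d = of_real (2 * cos (2*pi*real q/real n))"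
    using tr assms(1,4) by simp
  moreover have "cos (real n * (2*pi*real q/real n)) = 1"
    using assms(2) cos_int_2pin[of "int q"] by simp
  ultimately show ?thesis
    using dim_gen_eigenspace_one_mat2_power[OF det] assms(2) sin_two_pi_frac_eq_0_iff[OF assms(3,2)]
      \<open>b = 0 \<longleftrightarrow> _\<close> \<open>c = 0 \<longleftrightarrow> _\<close>
    by (simp only: quasi_regular_def T_mat_replicate AB) auto
qed

lemma cos_qr_value:
  assumes "l > 0" and "s \<in> {-1, 1}"
  shows "cos (l * qr_value n \<alpha> l s m q) = sin (corner_phase \<alpha>) * cos (2*pi*real q/real n)"
proof -
  define K where "K = sin (corner_phase \<alpha>) * cos (2*pi*real q/real n)"
  have "l * qr_value n \<alpha> l s m q = s * arccos K + 2*pi*real m"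
    using assms(1) by (simp add: qr_value_def K_def)
  then show ?thesis
    using cos_arccos_2pi[OF abs_sin_mult_cos_le_1 assms(2)] by (simp add: K_def)
qed

lemma quasi_eigenvalue_quasi_regular_iff:
  assumes "sin (corner_phase \<alpha>) \<noteq> 0" and "n \<ge> 1" and "l > 0"
  shows "quasi_eigenvalue (quasi_regular n \<alpha> l) \<sigma> \<longleftrightarrow>
    \<sigma> \<ge> 0 \<and> (\<exists>s m q. s \<in> {-1, 1} \<and> 2*q \<le> n \<and> \<sigma> = qr_value n \<alpha> l s m q)"
proof (cases "\<sigma> \<ge> 0")
  case True
  have "cos (l*\<sigma>) = sin (corner_phase \<alpha>) * cos (2*pi*real q/real n) \<longleftrightarrow>
      (\<exists>s m. s \<in> {-1, 1} \<and> \<sigma> = qr_value n \<alpha> l s m q)" for q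
  proof -
    have "0 \<le> l*\<sigma>"
      using True assms(3) by simp
    then show ?thesis
      using cos_eq_iff_arccos[OF _ abs_sin_mult_cos_le_1] assms(3)
      by (auto simp: qr_value_def field_simps)
  qed
  then show ?thesis
    unfolding quasi_eigenvalue_def eigenvalue_one_T_quasi_regular_iff[OF assms(1,2)] by blast
qed (simp add: quasi_eigenvalue_def)

lemma qr_value_eq_0_iff:
  assumes "l > 0" and "s \<in> {-1, 1}" and "2*q \<le> n" and "n \<ge> 1"
  shows "qr_value n \<alpha> l s m q = 0 \<longleftrightarrow>
    m = 0 \<and> (sin (corner_phase \<alpha>) = 1 \<and> q = 0 \<or> sin (corner_phase \<alpha>) = -1 \<and> 2*q = n)"
proof -
  define K where "K = sin (corner_phase \<alpha>) * cos (2*pi*real q/real n)"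
  have K: "\<bar>K\<bar> \<le> 1"
    unfolding K_def by (rule abs_sin_mult_cos_le_1)
  then have "0 \<le> arccos K" and "arccos K \<le> pi"
    using arccos_lbound arccos_ubound by (auto simp: abs_le_iff)
  have "s * arccos K + 2*pi*real m = 0 \<longleftrightarrow> m = 0 \<and> arccos K = 0"
  proof
    assume sum: "s * arccos K + 2*pi*real m = 0"
    have "- pi \<le> s * arccos K"
      using assms(2) \<open>0 \<le> arccos K\<close> \<open>arccos K \<le> pi\<close> by auto
    moreover have "m \<noteq> 0 \<Longrightarrow> 2*pi \<le> 2*pi*real m"
      by simp
    ultimately have "m = 0"
      using sum pi_gt_zero by fastforce
    then show "m = 0 \<and> arccos K = 0"
      using sum assms(2) by auto
  qed simp
  also have "\<dots> \<longleftrightarrow> m = 0 \<and> K = 1"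
    using arccos_eq_0_iff[of K] K by (auto simp: abs_le_iff)
  also have "\<dots> \<longleftrightarrow> m = 0 \<and> (sin (corner_phase \<alpha>) = 1 \<and> q = 0 \<or> sin (corner_phase \<alpha>) = -1 \<and> 2*q = n)"
    unfolding K_def mult_eq_1_iff_abs_le_1[OF abs_sin_le_one abs_cos_le_one]
    using cos_two_pi_frac_eq_1_iff[OF assms(3)] cos_two_pi_frac_eq_minus_1_iff[OF assms(3,4)] by auto
  finally show ?thesis
    using assms(1) by (simp add: qr_value_def K_def)
qed

theorem proposition1p10:
  fixes n :: nat and \<alpha> l :: real
  assumes "n \<ge> 1" and "0 < \<alpha>" and "\<alpha> < pi" and "\<not> exceptional_angle \<alpha>" and "l > 0"
  shows "{\<sigma>. quasi_eigenvalue (quasi_regular n \<alpha> l) \<sigma>} =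
           {\<sigma>. \<exists>s m q. s \<in> {-1, 1} \<and> q \<le> n div 2 \<and> \<sigma> = qr_value n \<alpha> l s m q} \<inter> {0..} \<and>
         (\<forall>s m q. s \<in> {-1, 1} \<longrightarrow> q \<le> n div 2 \<longrightarrow> qr_value n \<alpha> l s m q \<ge> 0 \<longrightarrow>
           qev_multiplicity (quasi_regular n \<alpha> l) (qr_value n \<alpha> l s m q) =
             (if (\<not> special_angle \<alpha> \<and> q = 0)
               \<or> (\<not> special_angle \<alpha> \<and> even n \<and> 2 * q = n)
               \<or> (even_special_angle \<alpha> \<and> q = 0 \<and> m = 0)
               \<or> (odd_special_angle \<alpha> \<and> even n \<and> 2 * q = n \<and> m = 0)
              then 1 else 2))"
proof -
  have sin: "sin (corner_phase \<alpha>) \<noteq> 0"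
    using sin_corner_phase_nonzero[OF assms(2-4)] .
  have half: "q \<le> n div 2 \<longleftrightarrow> 2*q \<le> n" for q
    by auto
  have "{\<sigma>. quasi_eigenvalue (quasi_regular n \<alpha> l) \<sigma>} =
      {\<sigma>. \<exists>s m q. s \<in> {-1, 1} \<and> q \<le> n div 2 \<and> \<sigma> = qr_value n \<alpha> l s m q} \<inter> {0..}"
    by (auto simp: quasi_eigenvalue_quasi_regular_iff[OF sin assms(1,5)] half)
  moreover have "qev_multiplicity (quasi_regular n \<alpha> l) (qr_value n \<alpha> l s m q) =
      (if (\<not> special_angle \<alpha> \<and> q = 0)
        \<or> (\<not> special_angle \<alpha> \<and> even n \<and> 2 * q = n)
        \<or> (even_special_angle \<alpha> \<and> q = 0 \<and> m = 0)
        \<or> (odd_special_angle \<alpha> \<and> even n \<and> 2 * q = n \<and> m = 0)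
       then 1 else 2)" (is "_ = (if ?C then 1 else 2)")
    if s: "s \<in> {-1, 1}" and "q \<le> n div 2" for s m q
  proof -
    have q: "2*q \<le> n"
      using \<open>q \<le> n div 2\<close> by auto
    have "?C \<longleftrightarrow> qr_value n \<alpha> l s m q = 0 \<or> ((q = 0 \<or> 2*q = n) \<and> cos (corner_phase \<alpha>) \<noteq> 0)"
      using qr_value_eq_0_iff[OF assms(5) s q assms(1)] cos_eq_0_iff_sin[of "corner_phase \<alpha>"]
        cos_corner_phase_eq_0_iff[OF assms(2,3)] even_special_angle_iff[OF assms(2,3)]
        odd_special_angle_iff[OF assms(2,3)]
      by auto
    then show ?thesis
      using dim_gen_eigenspace_one_T_quasi_regular[OF sin assms(1) q cos_qr_value[OF assms(5) s]]
      by (simp add: qev_multiplicity_def)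
  qed
  ultimately show ?thesis
    by blast
qed

end
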